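(* Let $V+Z\in\mathfrak v\oplus\mathfrak z$ with $Z=Z_c$ satisfy the genericity condition ($|c|>|c_k|>0$ and $V_{c_k}\neq0$, $V_{|c|}\neq0$, $V_0\neq0$). Let $\gamma:\mathbb R\to N$ (resp. $N'$) be a geodesic with $\dot\gamma(0)=((v,z),V+Z)$, let $\tau>0$, and assume $\dot\gamma(\tau)=(\gamma(\tau),V+Z)$. Write $V_0=\beta Y(Z)$, $V_\perp:=V_{c_k}+V_{|c|}=\sum_{m=1}^4\alpha_mE_m(Z)$ in the case of $N$ (resp. $=\sum_{m=1}^4\alpha'_mE'_m(Z)$ in the case of $N'$), and $v=x_iX_i+x_jX_j+y_iY_i+y_jY_j+y_kY_k$. Then $\tau c_k\in2\pi\mathbb Z$, $\tau|c|\in2\pi\mathbb Z$, and the translational element $a:=\gamma(\tau)\gamma(0)^{-1}$ equals, in $N$, $$\Bigl(\tau V_0,\ \tau\bigl(1+\tfrac{|V_\perp|^2}{2|c|^2}\bigr)Z_c+\tau\beta\bigl(\alpha_2-\tfrac{c_k}{c_i^2+c_j^2}(x_ic_i+x_jc_j)\bigr)(-c_jZ_i+c_iZ_j)+\tau\Bigl(-\tfrac{|V_{c_k}|^2}{2c_k|c|^2}+\beta\bigl(\alpha_4-\tfrac{1}{c_i^2+c_j^2}(x_ic_j-x_jc_i)\bigr)\Bigr)\bigl(c_k(c_iZ_i+c_jZ_j)-(c_i^2+c_j^2)Z_k\bigr)\Bigr),$$ and, in $N'$, $$\Bigl(\tau V_0,\ \tau\bigl(1+\tfrac{|V_\pe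rp|^2}{2|c|^2}\bigr)Z_c+\tau\beta\bigl(-|c|\alpha'_3+y_k-\tfrac{c_k}{c_i^2+c_j^2}(y_ic_i+y_jc_j)\bigr)(-c_jZ_i+c_iZ_j)+\tau\Bigl(-\tfrac{|V_{c_k}|^2}{2c_k|c|^2}+\beta\bigl(\alpha'_4-\tfrac{1}{c_i^2+c_j^2}(y_ic_j-y_jc_i)\bigr)\Bigr)\bigl(c_k(c_iZ_i+c_jZ_j)-(c_i^2+c_j^2)Z_k\bigr)\Bigr).$$
   Context: $\mathfrak v$ has orthonormal basis $X_i,X_j,Y_i,Y_j,Y_k$, $\mathfrak z$ orthonormal basis $Z_i,Z_j,Z_k$; on the orthogonal sum $\mathfrak v\oplus\mathfrak z$ two two-step nilpotent brackets ($\mathfrak z$ central, $[\mathfrak v,\mathfrak v]\subseteq\mathfrak z$) are given: $[\,,]$ with only nonzero basis brackets (up to antisymmetry) $[X_i,Y_j]=Z_k$, $[X_i,Y_k]=-Z_j$, $[X_j,Y_i]=-Z_k$, $[X_j,Y_k]=Z_i$; and $[\,,]'$ with $[X_i,X_j]'=Z_k$, $[Y_i,Y_j]'=Z_k$, $[Y_j,Y_k]'=Z_i$, $[Y_k,Y_i]'=Z_j$. $j,j':\mathfrak z\to\mathfrak{so}(\mathfrak v)$ are defined by $\langle j(Z)X,Y\rangle=\langle Z,[X,Y]\rangle$ and similarly for $j'$. $N,N'$ are the corresponding simply connected Lie groups with left invariant metrics $g,g'$ given by the inner product. Elements are written $(v,z):=\exp(v+z)$, with $(v,z)(\bar v,\bar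 z)=(v+\bar v,z+\bar z+\tfrac12[v,\bar v])$ (resp. $[\,,]'$); tangent vectors are written $(p,A)$ with $A=L_{p*}^{-1}X\in\mathfrak v\oplus\mathfrak z$. For $Z=Z_c=c_iZ_i+c_jZ_j+c_kZ_k$ and $V\in\mathfrak v$, $V_\lambda$ denotes the component of $V$ in the $(-\lambda^2)$-eigenspace of $j(Z)^2$ (resp. $j'(Z)^2$), so $V=V_{c_k}+V_{|c|}+V_0$ when $|c|>|c_k|>0$. Set $Y(Z)=c_iY_i+c_jY_j+c_kY_k$; $E_1(Z)=c_iX_i+c_jX_j$, $E_2(Z)=-c_jY_i+c_iY_j$, $E_3(Z)=|c|(c_jX_i-c_iX_j)$, $E_4(Z)=c_k(c_iY_i+c_jY_j)-(c_i^2+c_j^2)Y_k$; $E'_1(Z)=X_i$, $E'_2(Z)=X_j$, $E'_3(Z)=|c|(c_jY_i-c_iY_j)$, $E'_4(Z)=c_k(c_iY_i+c_jY_j)-(c_i^2+c_j^2)Y_k$. *)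

theory Defs
  imports "HOL-Analysis.Analysis"
begin

text \<open>Model.  v = real^5 with orthonormal basis (index order) X_i, X_j, Y_i, Y_j, Y_k;
  z = real^3 with orthonormal basis Z_i, Z_j, Z_k.  The inner product is the standard one
  (the bases are orthonormal), and v (+) z is the product space real^5 * real^3 with the
  orthogonal-sum inner product.  A point (v,z) of N stands for exp(v+z).\<close>

type_synonym vsp = "real^5"
type_synonym zsp = "real^3"

text \<open>The bracket of N, given on basis vectors by
  [X_i,Y_j]=Z_k, [X_i,Y_k]=-Z_j, [X_j,Y_i]=-Z_k, [X_j,Y_k]=Z_i, extended bilinearly and antisymmetrically.\<close>
definition brN :: "vsp \<Rightarrow> vsp \<Rightarrow> zsp" where
  "brN a b = vector
     [ a$2 * b$5 - a$5 * b$2,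
       - (a$1 * b$5 - a$5 * b$1),
       (a$1 * b$4 - a$4 * b$1) - (a$2 * b$3 - a$3 * b$2) ]"

text \<open>The bracket of N', given by
  [X_i,X_j]'=Z_k, [Y_i,Y_j]'=Z_k, [Y_j,Y_k]'=Z_i, [Y_k,Y_i]'=Z_j.\<close>
definition brN' :: "vsp \<Rightarrow> vsp \<Rightarrow> zsp" where
  "brN' a b = vector
     [ a$4 * b$5 - a$5 * b$4,
       a$5 * b$3 - a$3 * b$5,
       (a$1 * b$2 - a$2 * b$1) + (a$3 * b$4 - a$4 * b$3) ]"

definition gmult :: "(vsp \<Rightarrow> vsp \<Rightarrow> zsp) \<Rightarrow> vsp \<times> zsp \<Rightarrow> vsp \<times> zsp \<Rightarrow> vsp \<times> zsp" where
  "gmult br p q = (fst p + fst q, snd p + snd q + (1/2) *\<^sub>R br (fst p) (fst q))"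

definition ginv :: "vsp \<times> zsp \<Rightarrow> vsp \<times> zsp" where
  "ginv p = (- fst p, - snd p)"

definition lbr :: "(vsp \<Rightarrow> vsp \<Rightarrow> zsp) \<Rightarrow> vsp \<times> zsp \<Rightarrow> vsp \<times> zsp \<Rightarrow> vsp \<times> zsp" where
  "lbr br A B = (0, br (fst A) (fst B))"

definition jmap :: "(vsp \<Rightarrow> vsp \<Rightarrow> zsp) \<Rightarrow> zsp \<Rightarrow> vsp \<Rightarrow> vsp" where
  "jmap br Z X = (THE W. \<forall>Y. inner W Y = inner Z (br X Y))"

text \<open>V_lambda: the component of V in the (-lambda^2)-eigenspace of j(Z)^2, i.e. the
  orthogonal projection of V onto that eigenspace (j(Z)^2 is symmetric, so the eigenspace
  decomposition is orthogonal).\<close>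
definition eigsp :: "(vsp \<Rightarrow> vsp \<Rightarrow> zsp) \<Rightarrow> zsp \<Rightarrow> real \<Rightarrow> vsp set" where
  "eigsp br Z l = {W. jmap br Z (jmap br Z W) = - (l^2) *\<^sub>R W}"

definition Vcomp :: "(vsp \<Rightarrow> vsp \<Rightarrow> zsp) \<Rightarrow> zsp \<Rightarrow> real \<Rightarrow> vsp \<Rightarrow> vsp" where
  "Vcomp br Z l V = (THE W. W \<in> eigsp br Z l \<and> (\<forall>U \<in> eigsp br Z l. inner (V - W) U = 0))"

text \<open>Left translation differential: d(L_p)_e (u,w) = (u, w + 1/2 [fst p, u]).
  The left-trivialized representative A = L_{p*}^{-1} X of a coordinate tangent vector X at p.\<close>
definition triv :: "(vsp \<Rightarrow> vsp \<Rightarrow> zsp) \<Rightarrow> vsp \<times> zsp \<Rightarrow> vsp \<times> zsp \<Rightarrow> vsp \<times> zsp" where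
  "triv br p X = (fst X, snd X - (1/2) *\<^sub>R br (fst p) (fst X))"

text \<open>Left-trivialized velocity of a curve: gamma-dot(t) = (gamma(t), vel br gamma t).\<close>
definition vel :: "(vsp \<Rightarrow> vsp \<Rightarrow> zsp) \<Rightarrow> (real \<Rightarrow> vsp \<times> zsp) \<Rightarrow> real \<Rightarrow> vsp \<times> zsp" where
  "vel br \<gamma> t = triv br (\<gamma> t) (vector_derivative \<gamma> (at t))"

text \<open>ad_X^* (adjoint w.r.t. the inner product) and the Levi-Civita connection of the
  left-invariant metric on left-invariant fields (Koszul formula):
  nabla_X Y = 1/2([X,Y] - ad_X^* Y - ad_Y^* X).\<close>
definition adstar :: "(vsp \<Rightarrow> vsp \<Rightarrow> zsp) \<Rightarrow> vsp \<times> zsp \<Rightarrow> vsp \<times> zsp \<Rightarrow> vsp \<times> zsp" where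
  "adstar br X Y = (THE W. \<forall>U. inner W U = inner Y (lbr br X U))"

definition lcconn :: "(vsp \<Rightarrow> vsp \<Rightarrow> zsp) \<Rightarrow> vsp \<times> zsp \<Rightarrow> vsp \<times> zsp \<Rightarrow> vsp \<times> zsp" where
  "lcconn br X Y = (1/2) *\<^sub>R (lbr br X Y - adstar br X Y - adstar br Y X)"

text \<open>Geodesic of the left-invariant metric: a differentiable curve whose covariant
  acceleration vanishes.  Writing gamma' = sum a_m(t) E_m in a left-invariant orthonormal
  frame, D_t gamma' = A'(t) + nabla_{A(t)} A(t) with A(t) the left-trivialized velocity.\<close>
definition geodesic :: "(vsp \<Rightarrow> vsp \<Rightarrow> zsp) \<Rightarrow> (real \<Rightarrow> vsp \<times> zsp) \<Rightarrow> bool" where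
  "geodesic br \<gamma> \<longleftrightarrow>
     (\<forall>t. \<gamma> differentiable (at t)) \<and>
     (\<forall>t. (vel br \<gamma> has_vector_derivative (- lcconn br (vel br \<gamma> t) (vel br \<gamma> t))) (at t))"

definition Zc :: "real \<Rightarrow> real \<Rightarrow> real \<Rightarrow> zsp" where
  "Zc ci cj ck = vector [ci, cj, ck]"

definition Yv :: "real \<Rightarrow> real \<Rightarrow> real \<Rightarrow> vsp" where
  "Yv ci cj ck = vector [0, 0, ci, cj, ck]"

definition E1 :: "real \<Rightarrow> real \<Rightarrow> real \<Rightarrow> vsp" where
  "E1 ci cj ck = vector [ci, cj, 0, 0, 0]"
definition E2 :: "real \<Rightarrow> real \<Rightarrow> real \<Rightarrow> vsp" where
  "E2 ci cj ck = vector [0, 0, - cj, ci, 0]"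
definition E3 :: "real \<Rightarrow> real \<Rightarrow> real \<Rightarrow> vsp" where
  "E3 ci cj ck = norm (Zc ci cj ck) *\<^sub>R vector [cj, - ci, 0, 0, 0]"
definition E4 :: "real \<Rightarrow> real \<Rightarrow> real \<Rightarrow> vsp" where
  "E4 ci cj ck = vector [0, 0, ck * ci, ck * cj, - (ci^2 + cj^2)]"

definition E1' :: "real \<Rightarrow> real \<Rightarrow> real \<Rightarrow> vsp" where
  "E1' ci cj ck = vector [1, 0, 0, 0, 0]"
definition E2' :: "real \<Rightarrow> real \<Rightarrow> real \<Rightarrow> vsp" where
  "E2' ci cj ck = vector [0, 1, 0, 0, 0]"
definition E3' :: "real \<Rightarrow> real \<Rightarrow> real \<Rightarrow> vsp" where
  "E3' ci cj ck = norm (Zc ci cj ck) *\<^sub>R vector [0, 0, cj, - ci, 0]"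
definition E4' :: "real \<Rightarrow> real \<Rightarrow> real \<Rightarrow> vsp" where
  "E4' ci cj ck = vector [0, 0, ck * ci, ck * cj, - (ci^2 + cj^2)]"

end

theory Submission
  imports Defs
begin

text \<open>Along a geodesic of a two-step nilpotent group with left-invariant metric the central part Z of
  the left-trivialised velocity is constant, and its vertical part X solves X' = j(Z) X.  On the
  (-\<lambda>^2)-eigenspace of j(Z)^2 this flow is a rotation with angular speed \<lambda>, so if the
  velocity returns to its initial value after time \<tau>, with non-zero components V_{c_k} and V_{|c|},
  then \<tau> c_k and \<tau> |c| lie in 2\<pi>\<int>.  The vertical translation is then \<tau> V_0, and the central
  coordinate grows at the rate Z + 1/2 [position, X].  Over one period the terms mixing the two
  eigenspaces integrate to zero (they have periodic primitives because c_k^2 \<noteq> |c|^2), while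
  [j(Z) P, P] is constant along the rotation of each component P.  This expresses the translation
  through brackets of V_0, V_{c_k}, V_{|c|}, which are finally evaluated in the frames Y(Z), E_m(Z).\<close>

lemma vec5_nth [simp]:
  "(vector [a, b, c, d, e] :: ('x::zero)^5) $ 1 = a"
  "(vector [a, b, c, d, e] :: ('x::zero)^5) $ 2 = b"
  "(vector [a, b, c, d, e] :: ('x::zero)^5) $ 3 = c"
  "(vector [a, b, c, d, e] :: ('x::zero)^5) $ 4 = d"
  "(vector [a, b, c, d, e] :: ('x::zero)^5) $ 5 = e"
  unfolding vector_def by simp_all

lemma exhaust_5: "x = 1 \<or> x = 2 \<or> x = 3 \<or> x = 4 \<or> x = (5 :: 5)"
proof (induct x)
  case (of_int z)
  then have "z = 0 \<or> z = 1 \<or> z = 2 \<or> z = 3 \<or> z = 4" by fastforce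
  then show ?case by auto
qed

lemma forall_5: "(\<forall>i::5. P i) \<longleftrightarrow> P 1 \<and> P 2 \<and> P 3 \<and> P 4 \<and> P 5"
  by (metis exhaust_5)

lemma UNIV_5: "UNIV = {1, 2, 3, 4, 5 :: 5}"
  using exhaust_5 by auto

lemma sum_5: "sum f (UNIV :: 5 set) = f 1 + f 2 + f 3 + f 4 + f 5"
  unfolding UNIV_5 by (simp add: ac_simps)

lemma inner_vec5: "inner (x :: real^5) y = x$1 * y$1 + x$2 * y$2 + x$3 * y$3 + x$4 * y$4 + x$5 * y$5"
  by (simp add: inner_vec_def sum_5)

lemma inner_vec3: "inner (x :: real^3) y = x$1 * y$1 + x$2 * y$2 + x$3 * y$3"
  by (simp add: inner_vec_def sum_3)

lemma vec5_eq_iff: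
  "(x :: real^5) = y \<longleftrightarrow> x$1 = y$1 \<and> x$2 = y$2 \<and> x$3 = y$3 \<and> x$4 = y$4 \<and> x$5 = y$5"
  by (simp add: vec_eq_iff forall_5)

lemma vec3_eq_iff: "(x :: real^3) = y \<longleftrightarrow> x$1 = y$1 \<and> x$2 = y$2 \<and> x$3 = y$3"
  by (simp add: vec_eq_iff forall_3)

text \<open>Vectors in real^3 can be multiplied, and the simplifier turns x + x into 2 * x.\<close>

lemma scaleR_half_mult_2: "(c / 2) *\<^sub>R (2 * x) = c *\<^sub>R (x :: 'a :: real_algebra_1)"
  by (metis mult_2 scaleR_add_right scaleR_add_left field_sum_of_halves)

lemma has_integral_periodic_derivative:
  fixes F :: "real \<Rightarrow> 'a::banach"
  assumes "\<And>t. (F has_vector_derivative f t) (at t)" and "F \<tau> = F 0" and "0 \<le> \<tau>"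
  shows "(f has_integral 0) {0..\<tau>}"
proof -
  have "(f has_integral F \<tau> - F 0) {0..\<tau>}"
    by (rule fundamental_theorem_of_calculus) (use assms in \<open>auto intro: has_vector_derivative_at_within\<close>)
  with assms(2) show ?thesis by simp
qed

lemma has_integral_const_interval:
  "0 \<le> \<tau> \<Longrightarrow> ((\<lambda>t. c) has_integral \<tau> *\<^sub>R c) {0..\<tau>}"
  using has_integral_const_real[of c 0 \<tau>] by simp

lemma has_vector_derivative_imp_constant:
  fixes F :: "real \<Rightarrow> 'a::real_normed_vector"
  assumes "\<And>t. (F has_vector_derivative 0) (at t)"
  shows "F s = F t"
proof -
  obtain c where "\<And>x. x \<in> UNIV \<Longrightarrow> F x = c"
    by (rule has_vector_derivative_zero_constant[of UNIV F]) (use assms in auto)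
  then show ?thesis by simp
qed

section \<open>Skew brackets and the maps j(Z)\<close>

locale skew_bracket =
  fixes br :: "vsp \<Rightarrow> vsp \<Rightarrow> zsp" and J :: "zsp \<Rightarrow> vsp \<Rightarrow> vsp"
  assumes bilinear: "bilinear br"
    and antisym: "br x y = - br y x"
    and inner_J: "inner (J Z x) y = inner Z (br x y)"
begin

sublocale br: bounded_bilinear br
  using bilinear by (simp add: bilinear_conv_bounded_bilinear)

lemma br_self [simp]: "br x x = 0"
proof -
  have "2 *\<^sub>R br x x = 0"
    using antisym[of x x] by (simp add: scaleR_2 eq_neg_iff_add_eq_0)
  then show ?thesis by simp
qed

lemma J_unique:
  assumes "\<And>y. inner w y = inner Z (br x y)"
  shows "J Z x = w"
proof -
  have "inner (J Z x - w) y = 0" for y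
    by (simp add: inner_diff_left inner_J assms)
  from this[of "J Z x - w"] show ?thesis by simp
qed

lemma linear_J: "linear (J Z)"
proof (rule linearI)
  show "J Z (x + y) = J Z x + J Z y" for x y
    by (rule J_unique) (simp add: inner_add_left inner_J br.add_left inner_add_right)
  show "J Z (c *\<^sub>R x) = c *\<^sub>R J Z x" for c x
    by (rule J_unique) (simp add: inner_J br.scaleR_left)
qed

lemma bounded_linear_J: "bounded_linear (J Z)"
  using linear_J by (simp add: linear_conv_bounded_linear)

lemmas J_add = linear_add[OF linear_J] and J_scaleR = linear_scale[OF linear_J]
  and J_diff = linear_diff[OF linear_J] and J_zero = linear_0[OF linear_J]

lemma J_skew: "inner (J Z x) y = - inner x (J Z y)"
  by (simp add: inner_J antisym[of x y] inner_commute[of x])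

lemma inner_J_self [simp]: "inner (J Z x) x = 0" "inner x (J Z x) = 0"
  using J_skew[of Z x x] by (simp_all add: inner_commute)

lemma jmap_eq: "jmap br Z x = J Z x"
  unfolding jmap_def
proof (rule the_equality)
  show "\<forall>y. inner (J Z x) y = inner Z (br x y)" by (simp add: inner_J)
qed (rule J_unique[symmetric], blast)

lemma adstar_eq: "adstar br A B = (J (snd B) (fst A), 0)"
  unfolding adstar_def
proof (rule the_equality)
  have rep: "inner (J (snd B) (fst A), 0 :: zsp) U = inner B (lbr br A U)" for U
    by (simp add: lbr_def inner_J inner_prod_def)
  then show "\<forall>U. inner (J (snd B) (fst A), 0 :: zsp) U = inner B (lbr br A U)" by blast
  fix W assume W: "\<forall>U. inner W U = inner B (lbr br A U)"
  have "inner (W - (J (snd B) (fst A), 0)) U = 0" for U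
    using spec[OF W, of U] rep[of U] by (simp add: inner_diff_left)
  then show "W = (J (snd B) (fst A), 0)"
    by (metis inner_eq_zero_iff right_minus_eq)
qed

lemma geodesic_iff:
  "geodesic br \<gamma> \<longleftrightarrow> (\<forall>t. \<gamma> differentiable (at t)) \<and>
     (\<forall>t. (vel br \<gamma> has_vector_derivative (J (snd (vel br \<gamma> t)) (fst (vel br \<gamma> t)), 0)) (at t))"
  by (simp add: geodesic_def lcconn_def lbr_def adstar_eq)

lemma mem_eigsp: "W \<in> eigsp br Z l \<longleftrightarrow> J Z (J Z W) = - (l^2) *\<^sub>R W"
  by (simp add: eigsp_def jmap_eq)

lemma eigsp_orthogonal:
  assumes "U \<in> eigsp br Z l" "W \<in> eigsp br Z m" "l^2 \<noteq> m^2"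
  shows "inner U W = 0"
proof -
  have "- (l^2) * inner U W = inner (J Z (J Z U)) W"
    using assms(1) by (simp add: mem_eigsp)
  also have "\<dots> = inner U (J Z (J Z W))"
    by (simp add: J_skew)
  also have "\<dots> = - (m^2) * inner U W"
    using assms(2) by (simp add: mem_eigsp)
  finally show ?thesis using assms(3) by simp
qed

lemma Vcomp_eqI:
  assumes "W \<in> eigsp br Z l" "\<And>U. U \<in> eigsp br Z l \<Longrightarrow> inner (V - W) U = 0"
  shows "Vcomp br Z l V = W"
  unfolding Vcomp_def
proof (rule the_equality)
  show "W \<in> eigsp br Z l \<and> (\<forall>U\<in>eigsp br Z l. inner (V - W) U = 0)"
    using assms by blast
  fix W' assume W': "W' \<in> eigsp br Z l \<and> (\<forall>U\<in>eigsp br Z l. inner (V - W') U = 0)"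
  have "W' - W \<in> eigsp br Z l"
    using W' assms(1) by (simp add: mem_eigsp J_diff algebra_simps)
  then have "inner (V - W) (W' - W) - inner (V - W') (W' - W) = 0"
    using W' assms(2) by simp
  then have "inner (W' - W) (W' - W) = 0"
    by (simp add: inner_diff_left)
  then show "W' = W" by simp
qed

lemma Vcomp_orthogonal_sum:
  assumes "W0 \<in> eigsp br Z l0" "W1 \<in> eigsp br Z l1" "W2 \<in> eigsp br Z l2"
    and "l1^2 \<noteq> l0^2" "l2^2 \<noteq> l0^2"
  shows "Vcomp br Z l0 (W0 + W1 + W2) = W0"
  by (rule Vcomp_eqI) (use assms eigsp_orthogonal in \<open>auto simp: inner_add_left\<close>)

lemma Vcomp_frame:
  assumes Y: "J Z Y = 0"
    and A12: "\<And>a b. a *\<^sub>R A1 + b *\<^sub>R A2 \<in> eigsp br Z k1"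
    and B12: "\<And>a b. a *\<^sub>R B1 + b *\<^sub>R B2 \<in> eigsp br Z k2"
    and k: "k1 \<noteq> 0" "k2 \<noteq> 0" "k1^2 \<noteq> k2^2"
    and span: "V = a0 *\<^sub>R Y + (a1 *\<^sub>R A1 + a2 *\<^sub>R A2) + (a3 *\<^sub>R B1 + a4 *\<^sub>R B2)"
    and beta: "Vcomp br Z 0 V = \<beta> *\<^sub>R Y"
    and alpha: "Vcomp br Z k1 V + Vcomp br Z k2 V =
      \<alpha>1 *\<^sub>R A1 + \<alpha>2 *\<^sub>R A2 + \<alpha>3 *\<^sub>R B1 + \<alpha>4 *\<^sub>R B2"
  shows "V = \<beta> *\<^sub>R Y + (\<alpha>1 *\<^sub>R A1 + \<alpha>2 *\<^sub>R A2) + (\<alpha>3 *\<^sub>R B1 + \<alpha>4 *\<^sub>R B2)"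
    and "Vcomp br Z k1 V = \<alpha>1 *\<^sub>R A1 + \<alpha>2 *\<^sub>R A2"
    and "Vcomp br Z k2 V = \<alpha>3 *\<^sub>R B1 + \<alpha>4 *\<^sub>R B2"
proof -
  have Y0: "c *\<^sub>R Y \<in> eigsp br Z 0" for c
    using Y by (simp add: mem_eigsp J_scaleR J_zero)
  have sq: "k1^2 \<noteq> 0^2" "k2^2 \<noteq> 0^2" "k2^2 \<noteq> k1^2" "(0::real)^2 \<noteq> k1^2" "(0::real)^2 \<noteq> k2^2"
    using k by auto
  have decomposition: "Vcomp br Z 0 U + Vcomp br Z k1 U + Vcomp br Z k2 U = U"
    if "U = W0 + W1 + W2" "W0 \<in> eigsp br Z 0" "W1 \<in> eigsp br Z k1" "W2 \<in> eigsp br Z k2"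
    for U W0 W1 W2
    using that Vcomp_orthogonal_sum[of W0 Z 0 W1 k1 W2 k2] Vcomp_orthogonal_sum[of W1 Z k1 W0 0 W2 k2]
      Vcomp_orthogonal_sum[of W2 Z k2 W0 0 W1 k1] sq
    by (simp add: ac_simps)
  show V: "V = \<beta> *\<^sub>R Y + (\<alpha>1 *\<^sub>R A1 + \<alpha>2 *\<^sub>R A2) + (\<alpha>3 *\<^sub>R B1 + \<alpha>4 *\<^sub>R B2)"
    using decomposition[OF span Y0 A12 B12] beta alpha by (simp add: ac_simps)
  show "Vcomp br Z k1 V = \<alpha>1 *\<^sub>R A1 + \<alpha>2 *\<^sub>R A2"
    using Vcomp_orthogonal_sum[OF A12[of \<alpha>1 \<alpha>2] Y0[of \<beta>] B12[of \<alpha>3 \<alpha>4]] sq V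
    by (simp add: ac_simps)
  show "Vcomp br Z k2 V = \<alpha>3 *\<^sub>R B1 + \<alpha>4 *\<^sub>R B2"
    using Vcomp_orthogonal_sum[OF B12[of \<alpha>3 \<alpha>4] Y0[of \<beta>] A12[of \<alpha>1 \<alpha>2]] sq V
    by (simp add: ac_simps)
qed

section \<open>The flow of j(Z) on an eigenspace of j(Z)^2\<close>

text \<open>On the (-k^2)-eigenspace of j(Z)^2 the flow exp(t j(Z)) is cos(kt) + sin(kt)/k j(Z).\<close>

definition rotation :: "zsp \<Rightarrow> real \<Rightarrow> real \<Rightarrow> vsp \<Rightarrow> vsp" where
  "rotation Z k t W = cos (k * t) *\<^sub>R W + (sin (k * t) / k) *\<^sub>R J Z W"

lemma rotation_0 [simp]: "rotation Z k 0 W = W"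
  by (simp add: rotation_def)

lemma J_rotation_eigsp:
  assumes "W \<in> eigsp br Z k" "k \<noteq> 0"
  shows "J Z (rotation Z k t W) = cos (k * t) *\<^sub>R J Z W - (k * sin (k * t)) *\<^sub>R W"
proof -
  have "J Z (J Z W) = - (k^2) *\<^sub>R W" using assms(1) by (simp add: mem_eigsp)
  then show ?thesis
    using assms(2) by (simp add: rotation_def J_add J_scaleR power2_eq_square)
qed

lemma rotation_eigsp:
  assumes "W \<in> eigsp br Z k" "k \<noteq> 0"
  shows "rotation Z k t W \<in> eigsp br Z k"
proof -
  have JJW: "J Z (J Z W) = - (k^2) *\<^sub>R W" using assms(1) by (simp add: mem_eigsp)
  have "J Z (J Z (rotation Z k t W)) = cos (k * t) *\<^sub>R J Z (J Z W) - (k * sin (k * t)) *\<^sub>R J Z W"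
    by (simp add: J_rotation_eigsp[OF assms] J_diff J_scaleR)
  also have "\<dots> = - (k^2) *\<^sub>R rotation Z k t W"
    using assms(2) by (simp add: JJW rotation_def algebra_simps power2_eq_square)
  finally show ?thesis by (simp add: mem_eigsp)
qed

lemma has_vector_derivative_rotation:
  assumes "W \<in> eigsp br Z k" "k \<noteq> 0"
  shows "((\<lambda>t. rotation Z k t W) has_vector_derivative J Z (rotation Z k t W)) (at t)"
  unfolding J_rotation_eigsp[OF assms] unfolding rotation_def
  using assms(2) by (auto intro!: derivative_eq_intros simp: algebra_simps)

lemma has_vector_derivative_J_rotation:
  assumes "W \<in> eigsp br Z k" "k \<noteq> 0"
  shows "((\<lambda>t. J Z (rotation Z k t W)) has_vector_derivative - (k^2) *\<^sub>R rotation Z k t W) (at t)"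
  using bounded_linear.has_vector_derivative[OF bounded_linear_J[of Z] has_vector_derivative_rotation[OF assms]]
    rotation_eigsp[OF assms] by (simp add: mem_eigsp)

lemma rotation_fixed:
  assumes "rotation Z k \<tau> W = W" "W \<noteq> 0"
  shows "cos (k * \<tau>) = 1 \<and> sin (k * \<tau>) = 0"
proof -
  have "cos (k * \<tau>) * inner W W = inner W W"
    using arg_cong[OF assms(1), of "\<lambda>U. inner U W"] by (simp add: rotation_def inner_add_left)
  then have c: "cos (k * \<tau>) = 1" using assms(2) by simp
  then have "sin (k * \<tau>)^2 = 0" using sin_squared_eq[of "k * \<tau>"] by simp
  with c show ?thesis by simp
qed

lemma bracket_J_rotation_self:
  assumes "W \<in> eigsp br Z k" "k \<noteq> 0"
  shows "br (J Z (rotation Z k t W)) (rotation Z k t W) = br (J Z W) W"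
  unfolding J_rotation_eigsp[OF assms] unfolding rotation_def using assms(2)
  by (simp add: br.add_left br.add_right br.diff_left br.scaleR_left br.scaleR_right
      antisym[of W "J Z W"] algebra_simps)
    (metis scaleR_add_left scaleR_one sin_cos_squared_add3)

lemma has_integral_bracket_J_rotation_cross:
  assumes W1: "W1 \<in> eigsp br Z k1" "k1 \<noteq> 0" and W2: "W2 \<in> eigsp br Z k2" "k2 \<noteq> 0"
    and k12: "k1^2 \<noteq> k2^2" and \<tau>: "0 \<le> \<tau>"
    and periodic: "rotation Z k1 \<tau> W1 = W1" "rotation Z k2 \<tau> W2 = W2"
  shows "((\<lambda>t. br (J Z (rotation Z k1 t W1)) (rotation Z k2 t W2)) has_integral 0) {0..\<tau>}"
proof (rule has_integral_periodic_derivative[OF _ _ \<tau>])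
  let ?P = "\<lambda>t. rotation Z k1 t W1" and ?Q = "\<lambda>t. rotation Z k2 t W2"
  \<comment> \<open>K is a periodic primitive: differentiating moves j(Z) across the bracket, and j(Z)^2 acts
    as -k1^2 and -k2^2 on the two factors\<close>
  define L where "L t = k1^2 *\<^sub>R br (?P t) (?Q t) + br (J Z (?P t)) (J Z (?Q t))" for t
  define K where "K t = (1 / (k1^2 - k2^2)) *\<^sub>R L t" for t
  have "(L has_vector_derivative (k1^2 - k2^2) *\<^sub>R br (J Z (?P t)) (?Q t)) (at t)" for t
    unfolding L_def
    by (rule derivative_eq_intros br.has_vector_derivative has_vector_derivative_rotation
        has_vector_derivative_J_rotation W1 W2 refl)+
      (simp add: br.add_left br.add_right br.scaleR_left br.scaleR_right
        br.minus_left br.minus_right algebra_simps)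
  then show "(K has_vector_derivative br (J Z (?P t)) (?Q t)) (at t)" for t
    unfolding K_def using k12 by (auto intro!: derivative_eq_intros)
  show "K \<tau> = K 0" by (simp add: K_def L_def periodic)
qed

section \<open>Geodesics whose velocity splits into eigencomponents\<close>

lemma vel_eq_iff:
  assumes "\<gamma> differentiable (at t)"
  shows "vel br \<gamma> t = (A, B) \<longleftrightarrow>
    (\<gamma> has_vector_derivative (A, B + (1/2) *\<^sub>R br (fst (\<gamma> t)) A)) (at t)"
proof -
  have "(\<gamma> has_vector_derivative D) (at t) \<longleftrightarrow> vector_derivative \<gamma> (at t) = D" for D
    using assms vector_derivative_at vector_derivative_works by blast
  then show ?thesis
    by (cases "vector_derivative \<gamma> (at t)") (auto simp: vel_def triv_def)
qed

lemma skew_flow_unique: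
  assumes X: "\<And>t. (X has_vector_derivative J Z (X t)) (at t)"
    and Y: "\<And>t. (Y has_vector_derivative J Z (Y t)) (at t)"
    and "X 0 = Y 0"
  shows "X t = Y t"
proof -
  define D where "D t = X t - Y t" for t
  have D: "(D has_vector_derivative J Z (D t)) (at t)" for t
    unfolding D_def J_diff by (rule has_vector_derivative_diff[OF X Y])
  \<comment> \<open>j(Z) is skew, so the flow preserves the norm\<close>
  have "((\<lambda>t. inner (D t) (D t)) has_vector_derivative 0) (at t)" for t
    using bounded_bilinear.has_vector_derivative[OF bounded_bilinear_inner D D] by simp
  then have "inner (D t) (D t) = inner (D 0) (D 0)"
    by (rule has_vector_derivative_imp_constant)
  then show ?thesis using assms(3) by (simp add: D_def)
qed

lemma geodesic_velocity:
  assumes "geodesic br \<gamma>" "vel br \<gamma> 0 = (V, Z)"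
    and X: "\<And>t. (X has_vector_derivative J Z (X t)) (at t)" "X 0 = V"
  shows "vel br \<gamma> t = (X t, Z)"
proof -
  let ?A = "vel br \<gamma>"
  have A: "(?A has_vector_derivative (J (snd (?A t)) (fst (?A t)), 0)) (at t)" for t
    using assms(1) by (simp add: geodesic_iff)
  have "((\<lambda>t. snd (?A t)) has_vector_derivative 0) (at t)" for t
    using bounded_linear.has_vector_derivative[OF bounded_linear_snd A] by simp
  then have Z: "snd (?A t) = Z" for t
    using has_vector_derivative_imp_constant[of "\<lambda>t. snd (?A t)" t 0] assms(2) by simp
  have "((\<lambda>t. fst (?A t)) has_vector_derivative J Z (fst (?A t))) (at t)" for t
    using bounded_linear.has_vector_derivative[OF bounded_linear_fst A[of t]] Z by simp
  then have "fst (?A t) = X t"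
    by (rule skew_flow_unique[OF _ X(1)]) (simp add: assms(2) X(2))
  then show ?thesis using Z by (simp add: prod_eq_iff)
qed

end

locale split_geodesic = skew_bracket +
  fixes Z :: zsp and V0 P0 Q0 :: vsp and k1 k2 :: real
    and \<gamma> :: "real \<Rightarrow> vsp \<times> zsp" and v :: vsp and z :: zsp
  assumes kernel: "J Z V0 = 0"
    and eigen1: "P0 \<in> eigsp br Z k1" "k1 \<noteq> 0"
    and eigen2: "Q0 \<in> eigsp br Z k2" "k2 \<noteq> 0"
    and distinct: "k1^2 \<noteq> k2^2"
    and geodesic: "geodesic br \<gamma>"
    and initial: "\<gamma> 0 = (v, z)" "vel br \<gamma> 0 = (V0 + P0 + Q0, Z)"
begin

definition velocity :: "real \<Rightarrow> vsp" where
  "velocity t = V0 + rotation Z k1 t P0 + rotation Z k2 t Q0"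

definition oscillation :: "real \<Rightarrow> vsp" where
  "oscillation t = (1 / k1^2) *\<^sub>R J Z (rotation Z k1 t P0) + (1 / k2^2) *\<^sub>R J Z (rotation Z k2 t Q0)"

definition amplitude :: "real \<Rightarrow> vsp" where
  "amplitude t = (1 / k1^2) *\<^sub>R rotation Z k1 t P0 + (1 / k2^2) *\<^sub>R rotation Z k2 t Q0"

definition displacement :: "real \<Rightarrow> vsp" where
  "displacement t = t *\<^sub>R V0 + oscillation 0 - oscillation t"

lemma has_vector_derivative_velocity:
  "(velocity has_vector_derivative J Z (velocity t)) (at t)"
  unfolding velocity_def J_add kernel
  by (auto intro!: derivative_eq_intros has_vector_derivative_rotation eigen1 eigen2)

lemma has_vector_derivative_oscillation:
  "(oscillation has_vector_derivative - (rotation Z k1 t P0 + rotation Z k2 t Q0)) (at t)"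
  unfolding oscillation_def
  by (rule derivative_eq_intros has_vector_derivative_J_rotation eigen1 eigen2 refl)+
    (use eigen1(2) eigen2(2) in simp)

lemma has_vector_derivative_amplitude:
  "(amplitude has_vector_derivative oscillation t) (at t)"
  unfolding amplitude_def oscillation_def
  by (rule derivative_eq_intros has_vector_derivative_rotation eigen1 eigen2 refl)+ simp

lemma has_vector_derivative_displacement:
  "(displacement has_vector_derivative velocity t) (at t)"
  unfolding displacement_def velocity_def
  by (rule derivative_eq_intros has_vector_derivative_oscillation refl)+ simp

lemma vel_geodesic: "vel br \<gamma> t = (velocity t, Z)"
  by (rule geodesic_velocity[OF geodesic initial(2) has_vector_derivative_velocity])
    (simp add: velocity_def)

lemma velocity_periodic:
  assumes "velocity \<tau> = velocity 0"
  shows "rotation Z k1 \<tau> P0 = P0" "rotation Z k2 \<tau> Q0 = Q0"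
proof -
  let ?D1 = "rotation Z k1 \<tau> P0 - P0" and ?D2 = "rotation Z k2 \<tau> Q0 - Q0"
  have D: "?D1 \<in> eigsp br Z k1" "?D2 \<in> eigsp br Z k2"
    using rotation_eigsp eigen1 eigen2 by (auto simp: mem_eigsp J_diff algebra_simps)
  have "?D1 = - ?D2"
    using assms by (simp add: velocity_def algebra_simps)
  moreover have "inner ?D1 ?D2 = 0"
    by (rule eigsp_orthogonal[OF D distinct])
  ultimately have "?D1 = 0" "?D2 = 0"
    by (metis inner_minus_right inner_eq_zero_iff neg_equal_0_iff_equal)+
  then show "rotation Z k1 \<tau> P0 = P0" "rotation Z k2 \<tau> Q0 = Q0" by simp_all
qed

lemma oscillation_0: "oscillation 0 = (1 / k1^2) *\<^sub>R J Z P0 + (1 / k2^2) *\<^sub>R J Z Q0"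
  by (simp add: oscillation_def)

abbreviation self_bracket :: zsp where
  "self_bracket \<equiv> (1 / k1^2) *\<^sub>R br (J Z P0) P0 + (1 / k2^2) *\<^sub>R br (J Z Q0) Q0"

lemma has_integral_bracket_displacement_velocity:
  assumes periodic: "rotation Z k1 \<tau> P0 = P0" "rotation Z k2 \<tau> Q0 = Q0" and \<tau>: "0 \<le> \<tau>"
  shows "((\<lambda>t. br (displacement t) (velocity t)) has_integral
    \<tau> *\<^sub>R (- 2 *\<^sub>R br V0 (oscillation 0) - self_bracket)) {0..\<tau>}"
proof -
  let ?R1 = "\<lambda>t. rotation Z k1 t P0" and ?R2 = "\<lambda>t. rotation Z k2 t Q0" and ?O = oscillation
  let ?cross = "\<lambda>t. (1 / k1^2) *\<^sub>R br (J Z (?R1 t)) (?R2 t) + (1 / k2^2) *\<^sub>R br (J Z (?R2 t)) (?R1 t)"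
  define F where "F t = 2 *\<^sub>R br V0 (amplitude t) - t *\<^sub>R br V0 (?O t) - br (?O 0) (?O t)" for t
  define f where "f t = br V0 (?O t) + t *\<^sub>R br V0 (?R1 t + ?R2 t) + br (?O 0) (?R1 t + ?R2 t)" for t
  have "(F has_vector_derivative f t) (at t)" for t
    unfolding F_def f_def
    by (rule derivative_eq_intros br.has_vector_derivative has_vector_derivative_amplitude
        has_vector_derivative_oscillation refl)+
      (simp add: br.zero_left br.minus_right br.add_right br.diff_right scaleR_2 algebra_simps)
  then have "(f has_integral F \<tau> - F 0) {0..\<tau>}"
    using \<tau> by (intro fundamental_theorem_of_calculus) (auto intro: has_vector_derivative_at_within)
  moreover have "F \<tau> - F 0 = - \<tau> *\<^sub>R br V0 (?O 0)"
    using periodic by (simp add: F_def amplitude_def oscillation_def)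
  moreover have "(?cross has_integral 0) {0..\<tau>}"
    using has_integral_add[OF
        has_integral_cmul[OF has_integral_bracket_J_rotation_cross[OF eigen1 eigen2 distinct \<tau> periodic]]
        has_integral_cmul[OF has_integral_bracket_J_rotation_cross[OF eigen2 eigen1 distinct[symmetric] \<tau>
          periodic(2,1)]]]
    by simp
  ultimately have "((\<lambda>t. f t + br (?O 0) V0 - (self_bracket + ?cross t)) has_integral
      - \<tau> *\<^sub>R br V0 (?O 0) + \<tau> *\<^sub>R br (?O 0) V0 - (\<tau> *\<^sub>R self_bracket + 0)) {0..\<tau>}"
    using \<tau> by (intro has_integral_diff has_integral_add has_integral_const_interval) auto
  moreover have "- \<tau> *\<^sub>R br V0 (?O 0) + \<tau> *\<^sub>R br (?O 0) V0 - (\<tau> *\<^sub>R self_bracket + 0)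
      = \<tau> *\<^sub>R (- 2 *\<^sub>R br V0 (?O 0) - self_bracket)"
    by (simp add: antisym[of "?O 0" V0] scaleR_2 algebra_simps)
  moreover have "br (?O t) (?R1 t + ?R2 t) = self_bracket + ?cross t" for t
    by (simp add: oscillation_def br.add_left br.add_right br.scaleR_left
        bracket_J_rotation_self eigen1 eigen2)
  then have "br (displacement t) (velocity t) = f t + br (?O 0) V0 - (self_bracket + ?cross t)" for t
    by (simp add: f_def displacement_def velocity_def br.add_left br.add_right br.diff_left
        br.scaleR_left antisym[of "?O t" V0] algebra_simps)
  ultimately show ?thesis
    by simp
qed

lemma geodesic_has_vector_derivative:
  "(\<gamma> has_vector_derivative (velocity t, Z + (1/2) *\<^sub>R br (fst (\<gamma> t)) (velocity t))) (at t)"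
  using vel_geodesic[of t] geodesic by (simp add: geodesic_iff vel_eq_iff)

lemma geodesic_fst: "fst (\<gamma> t) = v + displacement t"
proof -
  have "((\<lambda>t. fst (\<gamma> t) - displacement t) has_vector_derivative 0) (at t)" for t
    using has_vector_derivative_diff[OF bounded_linear.has_vector_derivative[OF bounded_linear_fst
        geodesic_has_vector_derivative] has_vector_derivative_displacement] by simp
  then have "fst (\<gamma> t) - displacement t = fst (\<gamma> 0) - displacement 0"
    by (rule has_vector_derivative_imp_constant)
  then show ?thesis using initial(1) by (simp add: displacement_def diff_eq_eq)
qed

lemma geodesic_snd_period:
  assumes periodic: "rotation Z k1 \<tau> P0 = P0" "rotation Z k2 \<tau> Q0 = Q0" and \<tau>: "0 \<le> \<tau>"
  shows "snd (\<gamma> \<tau>) = z + \<tau> *\<^sub>R (Z + (1/2) *\<^sub>R br v V0 - br V0 (oscillation 0) - (1/2) *\<^sub>R self_bracket)"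
proof -
  let ?g = "\<lambda>t. Z + (1/2) *\<^sub>R (br v (velocity t) + br (displacement t) (velocity t))"
  have "((\<lambda>t. snd (\<gamma> t)) has_vector_derivative ?g t) (at t)" for t
    using bounded_linear.has_vector_derivative[OF bounded_linear_snd geodesic_has_vector_derivative]
    by (simp add: geodesic_fst br.add_left)
  then have "(?g has_integral snd (\<gamma> \<tau>) - snd (\<gamma> 0)) {0..\<tau>}"
    using \<tau> by (intro fundamental_theorem_of_calculus) (auto intro: has_vector_derivative_at_within)
  moreover have "((\<lambda>t. br v (velocity t)) has_integral br v (displacement \<tau>) - br v (displacement 0)) {0..\<tau>}"
    using \<tau> bounded_linear.has_vector_derivative[OF br.bounded_linear_right has_vector_derivative_displacement]
    by (intro fundamental_theorem_of_calculus) (auto intro: has_vector_derivative_at_within)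
  then have "(?g has_integral \<tau> *\<^sub>R Z + (1/2) *\<^sub>R (\<tau> *\<^sub>R br v V0
      + \<tau> *\<^sub>R (- 2 *\<^sub>R br V0 (oscillation 0) - self_bracket))) {0..\<tau>}"
    using \<tau> periodic
    by (intro has_integral_add has_integral_cmul has_integral_const_interval
        has_integral_bracket_displacement_velocity)
      (simp_all add: displacement_def oscillation_def br.scaleR_right br.zero_right)
  ultimately have "snd (\<gamma> \<tau>) - snd (\<gamma> 0) = \<tau> *\<^sub>R Z + (1/2) *\<^sub>R (\<tau> *\<^sub>R br v V0
      + \<tau> *\<^sub>R (- 2 *\<^sub>R br V0 (oscillation 0) - self_bracket))"
    by (rule has_integral_unique)
  then show ?thesis
    using initial(1) by (simp add: algebra_simps)
qed

lemma periodic_geodesic_translation: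
  assumes \<tau>: "0 < \<tau>" and closed: "vel br \<gamma> \<tau> = vel br \<gamma> 0" and nonzero: "P0 \<noteq> 0" "Q0 \<noteq> 0"
  shows "cos (k1 * \<tau>) = 1 \<and> sin (k1 * \<tau>) = 0 \<and> cos (k2 * \<tau>) = 1 \<and> sin (k2 * \<tau>) = 0 \<and>
    gmult br (\<gamma> \<tau>) (ginv (\<gamma> 0)) = (\<tau> *\<^sub>R V0, \<tau> *\<^sub>R (Z + br v V0
      - br V0 ((1 / k1^2) *\<^sub>R J Z P0 + (1 / k2^2) *\<^sub>R J Z Q0)
      - (1/2) *\<^sub>R ((1 / k1^2) *\<^sub>R br (J Z P0) P0 + (1 / k2^2) *\<^sub>R br (J Z Q0) Q0)))"
proof -
  have periodic: "rotation Z k1 \<tau> P0 = P0" "rotation Z k2 \<tau> Q0 = Q0"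
    using velocity_periodic closed by (simp_all add: vel_geodesic)
  have fst_end: "fst (\<gamma> \<tau>) = v + \<tau> *\<^sub>R V0"
    using periodic by (simp add: geodesic_fst displacement_def oscillation_def)
  have "gmult br (\<gamma> \<tau>) (ginv (\<gamma> 0)) =
      (\<tau> *\<^sub>R V0, snd (\<gamma> \<tau>) - z + (1/2) *\<^sub>R (\<tau> *\<^sub>R br v V0))"
    using fst_end initial(1)
    by (simp add: gmult_def ginv_def br.add_left br.minus_right br.scaleR_left antisym[of V0 v])
  also have "\<dots> = (\<tau> *\<^sub>R V0, \<tau> *\<^sub>R (Z + br v V0
      - br V0 ((1 / k1^2) *\<^sub>R J Z P0 + (1 / k2^2) *\<^sub>R J Z Q0)
      - (1/2) *\<^sub>R ((1 / k1^2) *\<^sub>R br (J Z P0) P0 + (1 / k2^2) *\<^sub>R br (J Z Q0) Q0)))"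
    unfolding geodesic_snd_period[OF periodic less_imp_le[OF \<tau>]]
    by (simp add: oscillation_0 algebra_simps scaleR_half_mult_2)
  finally show ?thesis
    using rotation_fixed[OF periodic(1) nonzero(1)] rotation_fixed[OF periodic(2) nonzero(2)]
    by (simp add: mult.commute)
qed

end

section \<open>Frames adapted to j(Z)\<close>

context skew_bracket
begin

lemma J_pair:
  assumes "J Z A1 = k *\<^sub>R A2" "J Z A2 = - k *\<^sub>R A1"
  shows "J Z (a *\<^sub>R A1 + b *\<^sub>R A2) = k *\<^sub>R (a *\<^sub>R A2 - b *\<^sub>R A1)"
  using assms by (simp add: J_add J_scaleR algebra_simps)

lemma pair_eigsp:
  assumes "J Z A1 = k *\<^sub>R A2" "J Z A2 = - k *\<^sub>R A1"
  shows "a *\<^sub>R A1 + b *\<^sub>R A2 \<in> eigsp br Z k"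
  using assms by (simp add: mem_eigsp J_pair[OF assms] J_scaleR J_diff algebra_simps power2_eq_square)

lemma bracket_J_pair_self:
  assumes "J Z A1 = k *\<^sub>R A2" "J Z A2 = - k *\<^sub>R A1"
  shows "br (J Z (a *\<^sub>R A1 + b *\<^sub>R A2)) (a *\<^sub>R A1 + b *\<^sub>R A2) = - (k * (a^2 + b^2)) *\<^sub>R br A1 A2"
  using assms
  by (simp add: J_pair[OF assms] br.add_left br.add_right br.diff_left br.scaleR_left br.scaleR_right
      antisym[of A2 A1] algebra_simps power2_eq_square)

lemma frame_geodesic_translation:
  assumes frame: "J Z Y = 0" "J Z A1 = k1 *\<^sub>R A2" "J Z A2 = - k1 *\<^sub>R A1"
      "J Z B1 = k2 *\<^sub>R B2" "J Z B2 = - k2 *\<^sub>R B1" "k1 \<noteq> 0" "k2 \<noteq> 0" "k1^2 \<noteq> k2^2"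
    and span: "V = a0 *\<^sub>R Y + (a1 *\<^sub>R A1 + a2 *\<^sub>R A2) + (a3 *\<^sub>R B1 + a4 *\<^sub>R B2)"
    and generic: "Vcomp br Z k1 V \<noteq> 0" "Vcomp br Z k2 V \<noteq> 0"
    and geo: "geodesic br \<gamma>" "\<gamma> 0 = (v, z)" "vel br \<gamma> 0 = (V, Z)"
    and closed: "0 < \<tau>" "vel br \<gamma> \<tau> = (V, Z)"
    and beta: "Vcomp br Z 0 V = \<beta> *\<^sub>R Y"
    and alpha: "Vcomp br Z k1 V + Vcomp br Z k2 V =
      \<alpha>1 *\<^sub>R A1 + \<alpha>2 *\<^sub>R A2 + \<alpha>3 *\<^sub>R B1 + \<alpha>4 *\<^sub>R B2"
  shows "cos (k1 * \<tau>) = 1 \<and> sin (k1 * \<tau>) = 0 \<and> cos (k2 * \<tau>) = 1 \<and> sin (k2 * \<tau>) = 0 \<and>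
    gmult br (\<gamma> \<tau>) (ginv (\<gamma> 0)) = (\<tau> *\<^sub>R \<beta> *\<^sub>R Y, \<tau> *\<^sub>R (Z + \<beta> *\<^sub>R br v Y
      + (\<beta> * \<alpha>2 / k1) *\<^sub>R br Y A1 - (\<beta> * \<alpha>1 / k1) *\<^sub>R br Y A2
      + (\<beta> * \<alpha>4 / k2) *\<^sub>R br Y B1 - (\<beta> * \<alpha>3 / k2) *\<^sub>R br Y B2
      + ((\<alpha>1^2 + \<alpha>2^2) / (2 * k1)) *\<^sub>R br A1 A2 + ((\<alpha>3^2 + \<alpha>4^2) / (2 * k2)) *\<^sub>R br B1 B2))"
proof -
  let ?P = "\<alpha>1 *\<^sub>R A1 + \<alpha>2 *\<^sub>R A2" and ?Q = "\<alpha>3 *\<^sub>R B1 + \<alpha>4 *\<^sub>R B2"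
  note components = Vcomp_frame[OF frame(1) pair_eigsp[OF frame(2,3)] pair_eigsp[OF frame(4,5)]
      frame(6-8) span beta alpha]
  interpret split_geodesic br J Z "\<beta> *\<^sub>R Y" ?P ?Q k1 k2 \<gamma> v z
    using frame geo components(1) by unfold_locales (simp_all add: pair_eigsp J_scaleR)
  have "?P \<noteq> 0" "?Q \<noteq> 0"
    using generic components(2,3) by simp_all
  moreover have "vel br \<gamma> \<tau> = vel br \<gamma> 0"
    using closed(2) geo(3) by simp
  ultimately have "cos (k1 * \<tau>) = 1 \<and> sin (k1 * \<tau>) = 0 \<and> cos (k2 * \<tau>) = 1 \<and> sin (k2 * \<tau>) = 0 \<and>
    gmult br (\<gamma> \<tau>) (ginv (\<gamma> 0)) = (\<tau> *\<^sub>R \<beta> *\<^sub>R Y, \<tau> *\<^sub>R (Z + br v (\<beta> *\<^sub>R Y)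
      - br (\<beta> *\<^sub>R Y) ((1 / k1^2) *\<^sub>R (k1 *\<^sub>R (\<alpha>1 *\<^sub>R A2 - \<alpha>2 *\<^sub>R A1))
                      + (1 / k2^2) *\<^sub>R (k2 *\<^sub>R (\<alpha>3 *\<^sub>R B2 - \<alpha>4 *\<^sub>R B1)))
      - (1/2) *\<^sub>R ((1 / k1^2) *\<^sub>R (- (k1 * (\<alpha>1^2 + \<alpha>2^2)) *\<^sub>R br A1 A2)
                  + (1 / k2^2) *\<^sub>R (- (k2 * (\<alpha>3^2 + \<alpha>4^2)) *\<^sub>R br B1 B2))))"
    using periodic_geodesic_translation[OF closed(1),
        unfolded bracket_J_pair_self[OF frame(2,3)] bracket_J_pair_self[OF frame(4,5)],
        unfolded J_pair[OF frame(2,3)] J_pair[OF frame(4,5)]]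
    by blast
  then show ?thesis
    using frame(6,7)
    by (simp add: br.add_right br.diff_right br.scaleR_left br.scaleR_right power2_eq_square
        add_divide_distrib algebra_simps)
qed

end

section \<open>The groups N and N'\<close>

definition jN :: "zsp \<Rightarrow> vsp \<Rightarrow> vsp" where
  "jN Z a = vector [Z$2 * a$5 - Z$3 * a$4, - Z$1 * a$5 + Z$3 * a$3, - Z$3 * a$2, Z$3 * a$1,
     Z$1 * a$2 - Z$2 * a$1]"

definition jN' :: "zsp \<Rightarrow> vsp \<Rightarrow> vsp" where
  "jN' Z a = vector [- Z$3 * a$2, Z$3 * a$1, Z$2 * a$5 - Z$3 * a$4, - Z$1 * a$5 + Z$3 * a$3,
     Z$1 * a$4 - Z$2 * a$3]"

interpretation N: skew_bracket brN jN
  by unfold_locales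
    (simp_all add: bilinear_def linear_iff brN_def jN_def vec3_eq_iff inner_vec5 inner_vec3 algebra_simps)

interpretation N': skew_bracket brN' jN'
  by unfold_locales
    (simp_all add: bilinear_def linear_iff brN'_def jN'_def vec3_eq_iff inner_vec5 inner_vec3 algebra_simps)

lemma norm_Zc_squared: "(norm (Zc ci cj ck))^2 = ci^2 + cj^2 + ck^2"
  unfolding power2_norm_eq_inner by (simp add: Zc_def inner_vec3 power2_eq_square)

lemma frame_N:
  fixes ci cj ck :: real
  defines "Z \<equiv> Zc ci cj ck"
  shows "jN Z (Yv ci cj ck) = 0"
    and "jN Z (E1 ci cj ck) = ck *\<^sub>R E2 ci cj ck" "jN Z (E2 ci cj ck) = - ck *\<^sub>R E1 ci cj ck"
    and "jN Z (E3 ci cj ck) = norm Z *\<^sub>R E4 ci cj ck" "jN Z (E4 ci cj ck) = - norm Z *\<^sub>R E3 ci cj ck"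
  using norm_Zc_squared[of ci cj ck]
  by (simp_all add: Z_def Zc_def jN_def Yv_def E1_def E2_def E3_def E4_def vec5_eq_iff algebra_simps
      power2_eq_square)

lemma frame_N':
  fixes ci cj ck :: real
  defines "Z \<equiv> Zc ci cj ck"
  shows "jN' Z (Yv ci cj ck) = 0"
    and "jN' Z (E1' ci cj ck) = ck *\<^sub>R E2' ci cj ck" "jN' Z (E2' ci cj ck) = - ck *\<^sub>R E1' ci cj ck"
    and "jN' Z (E3' ci cj ck) = norm Z *\<^sub>R E4' ci cj ck" "jN' Z (E4' ci cj ck) = - norm Z *\<^sub>R E3' ci cj ck"
  using norm_Zc_squared[of ci cj ck]
  by (simp_all add: Z_def Zc_def jN'_def Yv_def E1'_def E2'_def E3'_def E4'_def vec5_eq_iff algebra_simps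
      power2_eq_square)

lemma brackets_N:
  fixes ci cj ck :: real
  defines "Z \<equiv> Zc ci cj ck" and "s \<equiv> ci^2 + cj^2"
  shows "brN v (Yv ci cj ck) = vector [v$2 * ck, - v$1 * ck, v$1 * cj - v$2 * ci]"
    and "brN (Yv ci cj ck) (E1 ci cj ck) = vector [- ck * cj, ck * ci, 0]"
    and "brN (Yv ci cj ck) (E2 ci cj ck) = 0"
    and "brN (Yv ci cj ck) (E3 ci cj ck) = norm Z *\<^sub>R vector [ck * ci, ck * cj, - s]"
    and "brN (Yv ci cj ck) (E4 ci cj ck) = 0"
    and "brN (E1 ci cj ck) (E2 ci cj ck) = vector [0, 0, s]"
    and "brN (E3 ci cj ck) (E4 ci cj ck) = (norm Z * s) *\<^sub>R Z"
  by (simp_all add: Z_def s_def Zc_def brN_def Yv_def E1_def E2_def E3_def E4_def vec3_eq_iff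
      algebra_simps power2_eq_square)

lemma brackets_N':
  fixes ci cj ck :: real
  defines "Z \<equiv> Zc ci cj ck" and "s \<equiv> ci^2 + cj^2"
  shows "brN' v (Yv ci cj ck) = vector [v$4 * ck - v$5 * cj, v$5 * ci - v$3 * ck, v$3 * cj - v$4 * ci]"
    and "brN' (Yv ci cj ck) (E1' ci cj ck) = 0"
    and "brN' (Yv ci cj ck) (E2' ci cj ck) = 0"
    and "brN' (Yv ci cj ck) (E3' ci cj ck) = norm Z *\<^sub>R vector [ck * ci, ck * cj, - s]"
    and "brN' (Yv ci cj ck) (E4' ci cj ck) = (norm Z)^2 *\<^sub>R vector [- cj, ci, 0]"
    and "brN' (E1' ci cj ck) (E2' ci cj ck) = vector [0, 0, 1]"
    and "brN' (E3' ci cj ck) (E4' ci cj ck) = (norm Z * s) *\<^sub>R Z"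
  using norm_Zc_squared[of ci cj ck]
  by (simp_all add: Z_def s_def Zc_def brN'_def Yv_def E1'_def E2'_def E3'_def E4'_def vec3_eq_iff
      algebra_simps power2_eq_square)

lemma frame_span_N:
  fixes ci cj ck :: real and V :: vsp
  assumes "ci^2 + cj^2 \<noteq> 0"
  shows "\<exists>a0 a1 a2 a3 a4. V = a0 *\<^sub>R Yv ci cj ck + (a1 *\<^sub>R E1 ci cj ck + a2 *\<^sub>R E2 ci cj ck)
      + (a3 *\<^sub>R E3 ci cj ck + a4 *\<^sub>R E4 ci cj ck)"
proof -
  define s r where "s = ci^2 + cj^2" and "r = norm (Zc ci cj ck)"
  have "0 < s" unfolding s_def using assms by (simp add: less_le)
  then have "0 < s + ck^2" by (simp add: add_pos_nonneg)
  moreover have "r^2 = s + ck^2" using norm_Zc_squared[of ci cj ck] by (simp add: r_def s_def)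
  ultimately have "r \<noteq> 0" by auto
  define p q ir where "p = 1 / s" and "q = 1 / (s + ck^2)" and "ir = 1 / r"
  have inverses: "p * s = 1" "q * (s + ck^2) = 1" "ir * r = 1" "s = ci^2 + cj^2"
    using assms \<open>0 < s + ck^2\<close> \<open>r \<noteq> 0\<close> by (simp_all add: p_def q_def ir_def s_def)
  \<comment> \<open>the coefficients are the orthogonal projections onto the frame vectors\<close>
  have "V = ((V$3 * ci + V$4 * cj + V$5 * ck) * q) *\<^sub>R Yv ci cj ck
      + (((V$1 * ci + V$2 * cj) * p) *\<^sub>R E1 ci cj ck + ((V$4 * ci - V$3 * cj) * p) *\<^sub>R E2 ci cj ck)
      + (((V$1 * cj - V$2 * ci) * p * ir) *\<^sub>R E3 ci cj ck
        + ((ck * (ci * V$3 + cj * V$4) - s * V$5) * p * q) *\<^sub>R E4 ci cj ck)"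
    unfolding vec5_eq_iff
    by (simp add: Yv_def E1_def E2_def E3_def E4_def r_def[symmetric]) (use inverses in algebra)
  then show ?thesis by blast
qed

lemma frame_span_N':
  fixes ci cj ck :: real and V :: vsp
  assumes "ci^2 + cj^2 \<noteq> 0"
  shows "\<exists>a0 a1 a2 a3 a4. V = a0 *\<^sub>R Yv ci cj ck + (a1 *\<^sub>R E1' ci cj ck + a2 *\<^sub>R E2' ci cj ck)
      + (a3 *\<^sub>R E3' ci cj ck + a4 *\<^sub>R E4' ci cj ck)"
proof -
  define s r where "s = ci^2 + cj^2" and "r = norm (Zc ci cj ck)"
  have "0 < s" unfolding s_def using assms by (simp add: less_le)
  then have "0 < s + ck^2" by (simp add: add_pos_nonneg)
  moreover have "r^2 = s + ck^2" using norm_Zc_squared[of ci cj ck] by (simp add: r_def s_def)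
  ultimately have "r \<noteq> 0" by auto
  define p q ir where "p = 1 / s" and "q = 1 / (s + ck^2)" and "ir = 1 / r"
  have inverses: "p * s = 1" "q * (s + ck^2) = 1" "ir * r = 1" "s = ci^2 + cj^2"
    using assms \<open>0 < s + ck^2\<close> \<open>r \<noteq> 0\<close> by (simp_all add: p_def q_def ir_def s_def)
  have "V = ((V$3 * ci + V$4 * cj + V$5 * ck) * q) *\<^sub>R Yv ci cj ck
      + (V$1 *\<^sub>R E1' ci cj ck + V$2 *\<^sub>R E2' ci cj ck)
      + (((V$3 * cj - V$4 * ci) * p * ir) *\<^sub>R E3' ci cj ck
        + ((ck * (ci * V$3 + cj * V$4) - s * V$5) * p * q) *\<^sub>R E4' ci cj ck)"
    unfolding vec5_eq_iff
    by (simp add: Yv_def E1'_def E2'_def E3'_def E4'_def r_def[symmetric]) (use inverses in algebra)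
  then show ?thesis by blast
qed

lemma translation_N:
  fixes ci cj ck \<tau> \<beta> \<alpha>1 \<alpha>2 \<alpha>3 \<alpha>4 :: real and V v :: vsp and z :: zsp
    and \<gamma> :: "real \<Rightarrow> vsp \<times> zsp"
  defines "Z \<equiv> Zc ci cj ck"
  assumes gen: "norm Z > \<bar>ck\<bar>" "\<bar>ck\<bar> > 0"
    and gen_ck: "Vcomp brN Z ck V \<noteq> 0" and gen_c: "Vcomp brN Z (norm Z) V \<noteq> 0"
    and geo: "geodesic brN \<gamma>" "\<gamma> 0 = (v, z)" "vel brN \<gamma> 0 = (V, Z)"
    and closed: "\<tau> > 0" "vel brN \<gamma> \<tau> = (V, Z)"
    and beta: "Vcomp brN Z 0 V = \<beta> *\<^sub>R Yv ci cj ck"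
    and alpha: "Vcomp brN Z ck V + Vcomp brN Z (norm Z) V =
      \<alpha>1 *\<^sub>R E1 ci cj ck + \<alpha>2 *\<^sub>R E2 ci cj ck + \<alpha>3 *\<^sub>R E3 ci cj ck + \<alpha>4 *\<^sub>R E4 ci cj ck"
  shows "(\<exists>n::int. \<tau> * ck = 2 * pi * n) \<and> (\<exists>n::int. \<tau> * norm Z = 2 * pi * n) \<and>
    gmult brN (\<gamma> \<tau>) (ginv (\<gamma> 0)) =
      (\<tau> *\<^sub>R Vcomp brN Z 0 V,
         (\<tau> * (1 + (norm (Vcomp brN Z ck V + Vcomp brN Z (norm Z) V))^2 / (2 * (norm Z)^2))) *\<^sub>R Z
       + (\<tau> * \<beta> * (\<alpha>2 - ck / (ci^2 + cj^2) * (v$1 * ci + v$2 * cj))) *\<^sub>R vector [- cj, ci, 0]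
       + (\<tau> * (- ((norm (Vcomp brN Z ck V))^2 / (2 * ck * (norm Z)^2))
              + \<beta> * (\<alpha>4 - (v$1 * cj - v$2 * ci) / (ci^2 + cj^2))))
         *\<^sub>R vector [ck * ci, ck * cj, - (ci^2 + cj^2)])"
proof -
  define r s q where "r = norm Z" and "s = ci^2 + cj^2" and "q = ci^2 + cj^2 + ck^2"
  have r2: "r^2 = q"
    using norm_Zc_squared[of ci cj ck] by (simp add: r_def q_def Z_def)
  have ck: "ck \<noteq> 0" and r: "r \<noteq> 0" and k12: "ck^2 \<noteq> r^2" and s: "s \<noteq> 0" and q: "q \<noteq> 0"
    using gen power_strict_mono[of "\<bar>ck\<bar>" r 2] r2 by (auto simp: r_def s_def q_def)
  obtain a0 a1 a2 a3 a4 where span: "V = a0 *\<^sub>R Yv ci cj ck + (a1 *\<^sub>R E1 ci cj ck + a2 *\<^sub>R E2 ci cj ck)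
      + (a3 *\<^sub>R E3 ci cj ck + a4 *\<^sub>R E4 ci cj ck)"
    using frame_span_N[of ci cj V ck] s unfolding s_def by blast
  note frame = frame_N[of ci cj ck, folded Z_def]
  note comps = N.Vcomp_frame[OF frame(1) N.pair_eigsp[OF frame(2,3)] N.pair_eigsp[OF frame(4,5)]
      ck r[unfolded r_def] k12[unfolded r_def] span beta alpha]
  note T = N.frame_geodesic_translation[OF frame ck r[unfolded r_def] k12[unfolded r_def] span
      gen_ck gen_c geo closed beta alpha]
  have key: "\<tau> *\<^sub>R (Z + \<beta> *\<^sub>R brN v (Yv ci cj ck)
      + (\<beta> * \<alpha>2 / ck) *\<^sub>R brN (Yv ci cj ck) (E1 ci cj ck)
      - (\<beta> * \<alpha>1 / ck) *\<^sub>R brN (Yv ci cj ck) (E2 ci cj ck)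
      + (\<beta> * \<alpha>4 / norm Z) *\<^sub>R brN (Yv ci cj ck) (E3 ci cj ck)
      - (\<beta> * \<alpha>3 / norm Z) *\<^sub>R brN (Yv ci cj ck) (E4 ci cj ck)
      + ((\<alpha>1^2 + \<alpha>2^2) / (2 * ck)) *\<^sub>R brN (E1 ci cj ck) (E2 ci cj ck)
      + ((\<alpha>3^2 + \<alpha>4^2) / (2 * norm Z)) *\<^sub>R brN (E3 ci cj ck) (E4 ci cj ck))
    = (\<tau> * (1 + (s * (\<alpha>1^2 + \<alpha>2^2) + q * s * (\<alpha>3^2 + \<alpha>4^2)) / (2 * q))) *\<^sub>R Z
      + (\<tau> * \<beta> * (\<alpha>2 - ck / s * (v$1 * ci + v$2 * cj))) *\<^sub>R vector [- cj, ci, 0]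
      + (\<tau> * (- (s * (\<alpha>1^2 + \<alpha>2^2) / (2 * ck * q)) + \<beta> * (\<alpha>4 - (v$1 * cj - v$2 * ci) / s)))
        *\<^sub>R vector [ck * ci, ck * cj, - s]"
    unfolding brackets_N[where ci = ci and cj = cj and ck = ck, folded Z_def] r_def[symmetric]
    unfolding Z_def Zc_def vec3_eq_iff
    using ck r s q by (simp add: field_simps) (use r2 s_def q_def in algebra)
  have "(norm (Vcomp brN Z ck V))^2 = s * (\<alpha>1^2 + \<alpha>2^2)"
    "(norm (Vcomp brN Z ck V + Vcomp brN Z (norm Z) V))^2 = s * (\<alpha>1^2 + \<alpha>2^2) + q * s * (\<alpha>3^2 + \<alpha>4^2)"
    unfolding comps(2,3) power2_norm_eq_inner using r2
    by (simp_all add: inner_vec5 E1_def E2_def E3_def E4_def r_def[symmetric] Z_def[symmetric] s_def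
        q_def algebra_simps power2_eq_square)
  moreover have "(\<exists>n::int. \<tau> * ck = 2 * pi * n) \<and> (\<exists>n::int. \<tau> * r = 2 * pi * n)"
    using T cos_one_2pi_int[of "ck * \<tau>"] cos_one_2pi_int[of "r * \<tau>"]
    by (auto simp: r_def algebra_simps)
  ultimately show ?thesis
    using T[unfolded key] beta r2 by (simp add: r_def[symmetric] s_def)
qed

lemma translation_N':
  fixes ci cj ck \<tau> \<beta> \<alpha>1 \<alpha>2 \<alpha>3 \<alpha>4 :: real and V v :: vsp and z :: zsp
    and \<gamma> :: "real \<Rightarrow> vsp \<times> zsp"
  defines "Z \<equiv> Zc ci cj ck"
  assumes gen: "norm Z > \<bar>ck\<bar>" "\<bar>ck\<bar> > 0"
    and gen_ck: "Vcomp brN' Z ck V \<noteq> 0" and gen_c: "Vcomp brN' Z (norm Z) V \<noteq> 0"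
    and geo: "geodesic brN' \<gamma>" "\<gamma> 0 = (v, z)" "vel brN' \<gamma> 0 = (V, Z)"
    and closed: "\<tau> > 0" "vel brN' \<gamma> \<tau> = (V, Z)"
    and beta: "Vcomp brN' Z 0 V = \<beta> *\<^sub>R Yv ci cj ck"
    and alpha: "Vcomp brN' Z ck V + Vcomp brN' Z (norm Z) V =
      \<alpha>1 *\<^sub>R E1' ci cj ck + \<alpha>2 *\<^sub>R E2' ci cj ck + \<alpha>3 *\<^sub>R E3' ci cj ck + \<alpha>4 *\<^sub>R E4' ci cj ck"
  shows "(\<exists>n::int. \<tau> * ck = 2 * pi * n) \<and> (\<exists>n::int. \<tau> * norm Z = 2 * pi * n) \<and>
    gmult brN' (\<gamma> \<tau>) (ginv (\<gamma> 0)) =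
      (\<tau> *\<^sub>R Vcomp brN' Z 0 V,
         (\<tau> * (1 + (norm (Vcomp brN' Z ck V + Vcomp brN' Z (norm Z) V))^2 / (2 * (norm Z)^2))) *\<^sub>R Z
       + (\<tau> * \<beta> * (- norm Z * \<alpha>3 + v$5 - ck / (ci^2 + cj^2) * (v$3 * ci + v$4 * cj))) *\<^sub>R vector [- cj, ci, 0]
       + (\<tau> * (- ((norm (Vcomp brN' Z ck V))^2 / (2 * ck * (norm Z)^2))
              + \<beta> * (\<alpha>4 - (v$3 * cj - v$4 * ci) / (ci^2 + cj^2))))
         *\<^sub>R vector [ck * ci, ck * cj, - (ci^2 + cj^2)])"
proof -
  define r s q where "r = norm Z" and "s = ci^2 + cj^2" and "q = ci^2 + cj^2 + ck^2"
  have r2: "r^2 = q"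
    using norm_Zc_squared[of ci cj ck] by (simp add: r_def q_def Z_def)
  have ck: "ck \<noteq> 0" and r: "r \<noteq> 0" and k12: "ck^2 \<noteq> r^2" and s: "s \<noteq> 0" and q: "q \<noteq> 0"
    using gen power_strict_mono[of "\<bar>ck\<bar>" r 2] r2 by (auto simp: r_def s_def q_def)
  obtain a0 a1 a2 a3 a4 where span: "V = a0 *\<^sub>R Yv ci cj ck + (a1 *\<^sub>R E1' ci cj ck + a2 *\<^sub>R E2' ci cj ck)
      + (a3 *\<^sub>R E3' ci cj ck + a4 *\<^sub>R E4' ci cj ck)"
    using frame_span_N'[of ci cj V ck] s unfolding s_def by blast
  note frame = frame_N'[of ci cj ck, folded Z_def]
  note comps = N'.Vcomp_frame[OF frame(1) N'.pair_eigsp[OF frame(2,3)] N'.pair_eigsp[OF frame(4,5)]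
      ck r[unfolded r_def] k12[unfolded r_def] span beta alpha]
  note T = N'.frame_geodesic_translation[OF frame ck r[unfolded r_def] k12[unfolded r_def] span
      gen_ck gen_c geo closed beta alpha]
  have key: "\<tau> *\<^sub>R (Z + \<beta> *\<^sub>R brN' v (Yv ci cj ck)
      + (\<beta> * \<alpha>2 / ck) *\<^sub>R brN' (Yv ci cj ck) (E1' ci cj ck)
      - (\<beta> * \<alpha>1 / ck) *\<^sub>R brN' (Yv ci cj ck) (E2' ci cj ck)
      + (\<beta> * \<alpha>4 / norm Z) *\<^sub>R brN' (Yv ci cj ck) (E3' ci cj ck)
      - (\<beta> * \<alpha>3 / norm Z) *\<^sub>R brN' (Yv ci cj ck) (E4' ci cj ck)
      + ((\<alpha>1^2 + \<alpha>2^2) / (2 * ck)) *\<^sub>R brN' (E1' ci cj ck) (E2' ci cj ck)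
      + ((\<alpha>3^2 + \<alpha>4^2) / (2 * norm Z)) *\<^sub>R brN' (E3' ci cj ck) (E4' ci cj ck))
    = (\<tau> * (1 + ((\<alpha>1^2 + \<alpha>2^2) + q * s * (\<alpha>3^2 + \<alpha>4^2)) / (2 * q))) *\<^sub>R Z
      + (\<tau> * \<beta> * (- r * \<alpha>3 + v$5 - ck / s * (v$3 * ci + v$4 * cj))) *\<^sub>R vector [- cj, ci, 0]
      + (\<tau> * (- ((\<alpha>1^2 + \<alpha>2^2) / (2 * ck * q)) + \<beta> * (\<alpha>4 - (v$3 * cj - v$4 * ci) / s)))
        *\<^sub>R vector [ck * ci, ck * cj, - s]"
    unfolding brackets_N'[where ci = ci and cj = cj and ck = ck, folded Z_def] r_def[symmetric]
    unfolding Z_def Zc_def vec3_eq_iff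
    using ck r s q by (simp add: field_simps) (use r2 s_def q_def in algebra)
  have "(norm (Vcomp brN' Z ck V))^2 = (\<alpha>1^2 + \<alpha>2^2)"
    "(norm (Vcomp brN' Z ck V + Vcomp brN' Z (norm Z) V))^2 = (\<alpha>1^2 + \<alpha>2^2) + q * s * (\<alpha>3^2 + \<alpha>4^2)"
    unfolding comps(2,3) power2_norm_eq_inner using r2
    by (simp_all add: inner_vec5 E1'_def E2'_def E3'_def E4'_def r_def[symmetric] Z_def[symmetric] s_def
        q_def algebra_simps power2_eq_square)
  moreover have "(\<exists>n::int. \<tau> * ck = 2 * pi * n) \<and> (\<exists>n::int. \<tau> * r = 2 * pi * n)"
    using T cos_one_2pi_int[of "ck * \<tau>"] cos_one_2pi_int[of "r * \<tau>"]
    by (auto simp: r_def algebra_simps)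
  ultimately show ?thesis
    using T[unfolded key] beta r2 by (simp add: r_def[symmetric] s_def)
qed

theorem lemma5p4:
  fixes primed :: bool  \<comment> \<open>False: the group N with bracket brN; True: N' with brN'\<close>
    and ci cj ck \<tau> \<beta> \<alpha>1 \<alpha>2 \<alpha>3 \<alpha>4 :: real
    and V v :: "real^5" and z :: "real^3"
    and \<gamma> :: "real \<Rightarrow> (real^5) \<times> (real^3)"
  defines "br \<equiv> (if primed then brN' else brN)"
    and "Z \<equiv> Zc ci cj ck"
  assumes gen: "norm Z > \<bar>ck\<bar>" "\<bar>ck\<bar> > 0"
    and gen_ck: "Vcomp br Z ck V \<noteq> 0"
    and gen_c: "Vcomp br Z (norm Z) V \<noteq> 0"
    and gen_0: "Vcomp br Z 0 V \<noteq> 0"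
    and geo: "geodesic br \<gamma>"
    and init: "\<gamma> 0 = (v, z)" "vel br \<gamma> 0 = (V, Z)"
    and tau: "\<tau> > 0" "vel br \<gamma> \<tau> = (V, Z)"
    and beta: "Vcomp br Z 0 V = \<beta> *\<^sub>R Yv ci cj ck"
    and alpha: "Vcomp br Z ck V + Vcomp br Z (norm Z) V =
       (if primed then
          \<alpha>1 *\<^sub>R E1' ci cj ck + \<alpha>2 *\<^sub>R E2' ci cj ck + \<alpha>3 *\<^sub>R E3' ci cj ck + \<alpha>4 *\<^sub>R E4' ci cj ck
        else
          \<alpha>1 *\<^sub>R E1 ci cj ck + \<alpha>2 *\<^sub>R E2 ci cj ck + \<alpha>3 *\<^sub>R E3 ci cj ck + \<alpha>4 *\<^sub>R E4 ci cj ck)"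
  shows "(\<exists>n::int. \<tau> * ck = 2 * pi * n) \<and> (\<exists>n::int. \<tau> * norm Z = 2 * pi * n) \<and>
    gmult br (\<gamma> \<tau>) (ginv (\<gamma> 0)) =
      (\<tau> *\<^sub>R Vcomp br Z 0 V,
         (\<tau> * (1 + (norm (Vcomp br Z ck V + Vcomp br Z (norm Z) V))^2 / (2 * (norm Z)^2))) *\<^sub>R Z
       + (\<tau> * \<beta> *
           (if primed then - norm Z * \<alpha>3 + v$5 - ck / (ci^2 + cj^2) * (v$3 * ci + v$4 * cj)
            else \<alpha>2 - ck / (ci^2 + cj^2) * (v$1 * ci + v$2 * cj)))
         *\<^sub>R vector [- cj, ci, 0]
       + (\<tau> * (- ((norm (Vcomp br Z ck V))^2 / (2 * ck * (norm Z)^2))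
              + \<beta> * (\<alpha>4 - (if primed then (v$3 * cj - v$4 * ci) else (v$1 * cj - v$2 * ci))
                                / (ci^2 + cj^2))))
         *\<^sub>R vector [ck * ci, ck * cj, - (ci^2 + cj^2)])"
proof (cases primed)
  case True
  then have br: "br = brN'" by (simp add: br_def)
  show ?thesis
    using True translation_N'[where ci = ci and cj = cj and ck = ck, folded Z_def, OF gen
        gen_ck[unfolded br] gen_c[unfolded br] geo[unfolded br] init(1) init(2)[unfolded br] tau(1)
        tau(2)[unfolded br] beta[unfolded br] alpha[unfolded br if_P[OF True]]]
    by (simp add: br)
next
  case False
  then have br: "br = brN" by (simp add: br_def)
  show ?thesis
    using False translation_N[where ci = ci and cj = cj and ck = ck, folded Z_def, OF gen
        gen_ck[unfolded br] gen_c[unfolded br] geo[unfolded br] init(1) init(2)[unfolded br] tau(1)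
        tau(2)[unfolded br] beta[unfolded br] alpha[unfolded br if_not_P[OF False]]]
    by (simp add: br)
qed

end
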